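(* Let $p(x)=\sum_{j=1}^k\frac{\pi_j}{\sigma^d(2\pi)^{d/2}}e^{-\|x-\mu_j\|^2/(2\sigma^2)}$ be a mixture of Gaussians $N(\mu_j,\sigma^2I)$ on $\mathbb{R}^d$ with weights $\pi_j>0$, $\sum_j\pi_j=1$, and let $X\sim p$. Let $\epsilon>0$ satisfy $$\epsilon\le\min_j\left(\frac{\pi_j^{1/d}}{\sqrt{2\pi}\,\sigma e^{16}}\right)^d$$ and suppose $$\min_{j\ne k}\|\mu_j-\mu_k\|>2\sigma\max_j\sqrt{2d\log\Big(\frac1{\sigma\sqrt{2\pi}}\Big)+2\log\Big(\frac1\epsilon\Big)-2\log\Big(\frac1{\pi_j}\Big)}.$$ Then $\mathbb{P}(p(X)<\epsilon)\le e^{-8d}$. *)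

theory Defs
  imports "HOL-Analysis.Analysis"
begin

definition gmm_density :: "nat \<Rightarrow> (nat \<Rightarrow> real) \<Rightarrow> (nat \<Rightarrow> 'a::euclidean_space) \<Rightarrow> real \<Rightarrow> 'a \<Rightarrow> real" where
  "gmm_density k w mu \<sigma> x =
     (\<Sum>j<k. w j / (\<sigma> ^ DIM('a) * (2 * pi) powr (real DIM('a) / 2))
              * exp (- (norm (x - mu j))\<^sup>2 / (2 * \<sigma>\<^sup>2)))"

end

theory Submission
  imports Defs "HOL-Probability.Distributions"
begin

text \<open>
  Where the mixture density is below \<open>\<epsilon>\<close>, so is each weighted component, and
  \<open>\<epsilon> \<le> \<pi>\<^sub>j exp(-16d) / (\<sigma> sqrt(2\<pi>))^d\<close> then forces \<open>|x - \<mu>\<^sub>j|^2 > 32 d \<sigma>^2\<close> for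
  every \<open>j\<close>. On that region \<open>exp(-r/(2\<sigma>^2)) \<le> exp(-12d) exp(-r/(2(2\<sigma>)^2))\<close>, so the
  density is dominated by \<open>2^d exp(-12d)\<close> times the same mixture with standard deviation
  \<open>2\<sigma>\<close>, a probability density. Hence the event has probability at most
  \<open>2^d exp(-12d) \<le> exp(-8d)\<close>.
\<close>

lemma powr_half_eq_sqrt_power:
  assumes "a > 0"
  shows "a powr (real n / 2) = sqrt a ^ n"
proof -
  have "sqrt a ^ n = (a powr (1/2)) powr real n"
    using assms by (simp add: powr_half_sqrt powr_realpow)
  then show ?thesis by (simp add: powr_powr)
qed

lemma nn_integral_gaussian_kernel_real:
  assumes "s > 0"
  shows "(\<integral>\<^sup>+x. ennreal (exp (- x\<^sup>2 / (2 * s\<^sup>2))) \<partial>lborel) = ennreal (sqrt (2 * pi) * s)"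
proof -
  have "(\<integral>\<^sup>+x. ennreal (normal_density 0 s x) \<partial>lborel) = 1"
    using prob_space.emeasure_space_1[OF prob_space_normal_density[where \<mu>=0 and \<sigma>=s]] assms
    by (subst (asm) emeasure_density) auto
  moreover have "ennreal (exp (- x\<^sup>2 / (2 * s\<^sup>2)))
      = ennreal (sqrt (2 * pi) * s) * ennreal (normal_density 0 s x)" for x
    using assms by (simp add: normal_density_def ennreal_mult[symmetric] real_sqrt_mult)
  ultimately show ?thesis
    by (simp add: nn_integral_cmult)
qed

lemma nn_integral_gaussian_kernel:
  fixes m :: "'a::euclidean_space"
  assumes "s > 0"
  shows "(\<integral>\<^sup>+x. ennreal (exp (- (norm (x - m))\<^sup>2 / (2 * s\<^sup>2))) \<partial>lborel)
           = ennreal ((sqrt (2 * pi) * s) ^ DIM('a))"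
proof -
  have product: "ennreal (exp (- (norm x)\<^sup>2 / (2 * s\<^sup>2)))
      = (\<Prod>b\<in>Basis. ennreal (exp (- (x \<bullet> b)\<^sup>2 / (2 * s\<^sup>2))))" for x :: 'a
  proof -
    have "(norm x)\<^sup>2 = (\<Sum>b\<in>Basis. (x \<bullet> b)\<^sup>2)"
      by (subst power2_norm_eq_inner) (simp add: euclidean_inner[of x x] power2_eq_square)
    then show ?thesis
      by (simp add: prod_ennreal exp_sum[symmetric] sum_divide_distrib[symmetric] sum_negf)
  qed
  have "(\<integral>\<^sup>+x. ennreal (exp (- (norm (x - m))\<^sup>2 / (2 * s\<^sup>2))) \<partial>lborel)
      = (\<integral>\<^sup>+x. ennreal (exp (- (norm x)\<^sup>2 / (2 * s\<^sup>2))) \<partial>distr lborel borel ((+) (- m)))"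
    by (subst nn_integral_distr) auto
  also have "\<dots> = (\<integral>\<^sup>+x. (\<Prod>b\<in>Basis. ennreal (exp (- ((x::'a) \<bullet> b)\<^sup>2 / (2 * s\<^sup>2)))) \<partial>lborel)"
    unfolding lborel_distr_plus by (rule nn_integral_cong) (rule product)
  also have "\<dots> = (\<Prod>b\<in>(Basis::'a set). \<integral>\<^sup>+x. ennreal (exp (- x\<^sup>2 / (2 * s\<^sup>2))) \<partial>lborel)"
    by (rule nn_integral_lborel_prod) auto
  finally show ?thesis
    using nn_integral_gaussian_kernel_real[OF assms] assms by (simp add: ennreal_power)
qed

lemma borel_measurable_gmm_density [measurable]:
  "gmm_density k w mu \<sigma> \<in> borel_measurable borel"
  unfolding gmm_density_def by measurable

lemma gmm_density_eq:
  fixes mu :: "nat \<Rightarrow> 'a::euclidean_space"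
  shows "gmm_density k w mu \<sigma> x
           = (\<Sum>j<k. w j * exp (- (norm (x - mu j))\<^sup>2 / (2 * \<sigma>\<^sup>2))) / (sqrt (2 * pi) * \<sigma>) ^ DIM('a)"
  by (simp add: gmm_density_def powr_half_eq_sqrt_power sum_divide_distrib power_mult_distrib
      mult.commute)

lemma nn_integral_gmm_density:
  fixes mu :: "nat \<Rightarrow> 'a::euclidean_space"
  assumes "\<sigma> > 0" and "\<And>j. j < k \<Longrightarrow> w j \<ge> 0"
  shows "(\<integral>\<^sup>+x. ennreal (gmm_density k w mu \<sigma> x) \<partial>lborel) = ennreal (\<Sum>j<k. w j)"
proof -
  let ?N = "(sqrt (2 * pi) * \<sigma>) ^ DIM('a)"
  have N: "?N > 0" using assms(1) by simp
  have split: "gmm_density k w mu \<sigma> x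
      = (\<Sum>j<k. w j / ?N * exp (- (norm (x - mu j))\<^sup>2 / (2 * \<sigma>\<^sup>2)))" for x
    by (simp add: gmm_density_eq sum_divide_distrib)
  have "ennreal (gmm_density k w mu \<sigma> x)
      = (\<Sum>j<k. ennreal (w j / ?N) * ennreal (exp (- (norm (x - mu j))\<^sup>2 / (2 * \<sigma>\<^sup>2))))" for x
    unfolding split using assms N
    by (subst sum_ennreal[symmetric]) (auto intro!: sum.cong simp: ennreal_mult[symmetric])
  then have "(\<integral>\<^sup>+x. ennreal (gmm_density k w mu \<sigma> x) \<partial>lborel)
      = (\<integral>\<^sup>+x. (\<Sum>j<k. ennreal (w j / ?N) * ennreal (exp (- (norm (x - mu j))\<^sup>2 / (2 * \<sigma>\<^sup>2)))) \<partial>lborel)"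
    by simp
  also have "\<dots> = (\<Sum>j<k. ennreal (w j / ?N) * ennreal ?N)"
    using assms
    by (simp add: nn_integral_sum nn_integral_cmult nn_integral_gaussian_kernel[OF assms(1), simplified])
  also have "\<dots> = (\<Sum>j<k. ennreal (w j))"
    using assms N by (simp add: ennreal_mult[symmetric])
  also have "\<dots> = ennreal (\<Sum>j<k. w j)"
    using assms by (intro sum_ennreal) auto
  finally show ?thesis .
qed

lemma exp_gaussian_tail_le_doubled:
  fixes \<sigma> r t :: real
  assumes "\<sigma> > 0" and "exp (- r / (2 * \<sigma>\<^sup>2)) < exp (- 4 * t)"
  shows "exp (- r / (2 * \<sigma>\<^sup>2)) \<le> exp (- 3 * t) * exp (- r / (2 * (2 * \<sigma>)\<^sup>2))"
proof -
  have "r > 8 * t * \<sigma>\<^sup>2"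
    using assms by (simp add: field_simps)
  then have "- r / (2 * \<sigma>\<^sup>2) \<le> - 3 * t + - r / (2 * (2 * \<sigma>)\<^sup>2)"
    using assms(1) by (simp add: field_simps power2_eq_square)
  then show ?thesis
    by (metis exp_add exp_le_cancel_iff)
qed

lemma gmm_density_le_doubled_below_threshold:
  fixes mu :: "nat \<Rightarrow> 'a::euclidean_space"
  defines "d \<equiv> DIM('a)"
  assumes sigma_pos: "\<sigma> > 0"
    and w_nonneg: "\<And>j. j < k \<Longrightarrow> w j \<ge> 0"
    and threshold: "\<And>j. j < k \<Longrightarrow> \<epsilon> \<le> w j * exp (- 4 * t) / (sqrt (2 * pi) * \<sigma>) ^ d"
    and below: "gmm_density k w mu \<sigma> x < \<epsilon>"
  shows "gmm_density k w mu \<sigma> x \<le> 2 ^ d * exp (- 3 * t) * gmm_density k w mu (2 * \<sigma>) x"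
proof -
  let ?N = "(sqrt (2 * pi) * \<sigma>) ^ d"
  let ?G = "\<lambda>s j. exp (- (norm (x - mu j))\<^sup>2 / (2 * s\<^sup>2))"
  have N: "?N > 0" using sigma_pos by simp
  have component_le: "w j * ?G \<sigma> j \<le> w j * (exp (- 3 * t) * ?G (2 * \<sigma>) j)" if j: "j < k" for j
  proof (cases "w j = 0")
    case False
    with w_nonneg j have wj: "w j > 0" by fastforce
    have "w j * ?G \<sigma> j / ?N \<le> gmm_density k w mu \<sigma> x"
      unfolding gmm_density_eq d_def[symmetric] using j w_nonneg N
      by (intro divide_right_mono member_le_sum) auto
    also have "\<dots> < w j * exp (- 4 * t) / ?N"
      using below threshold[OF j] by linarith
    finally have "w j * ?G \<sigma> j / ?N < w j * exp (- 4 * t) / ?N" .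
    then have "w j * ?G \<sigma> j < w j * exp (- 4 * t)"
      using N by (simp add: divide_less_cancel)
    then have "?G \<sigma> j < exp (- 4 * t)"
      using wj by (simp only: mult_less_cancel_left_pos)
    then show ?thesis
      using wj sigma_pos by (intro mult_left_mono exp_gaussian_tail_le_doubled) auto
  qed simp
  have "gmm_density k w mu \<sigma> x \<le> (\<Sum>j<k. w j * (exp (- 3 * t) * ?G (2 * \<sigma>) j)) / ?N"
    unfolding gmm_density_eq d_def[symmetric] using N component_le
    by (intro divide_right_mono sum_mono) auto
  also have "\<dots> = exp (- 3 * t) * (\<Sum>j<k. w j * ?G (2 * \<sigma>) j) / ?N"
    by (simp add: sum_distrib_left mult.left_commute)
  also have "\<dots> = 2 ^ d * exp (- 3 * t) * gmm_density k w mu (2 * \<sigma>) x"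
    unfolding gmm_density_eq d_def[symmetric]
    using sigma_pos by (simp add: power_mult_distrib)
  finally show ?thesis .
qed

lemma gmm_threshold_eq:
  assumes "w > 0" and "d > 0"
  shows "(w powr (1 / real d) / (sqrt (2 * pi) * \<sigma> * exp c)) ^ d
           = w * exp (- c * real d) / (sqrt (2 * pi) * \<sigma>) ^ d"
proof -
  have "(w powr (1 / real d)) ^ d = w"
    using assms by (simp add: powr_realpow[symmetric] powr_powr)
  moreover have "exp c ^ d = exp (c * real d)"
    by (simp add: exp_of_nat_mult[symmetric] mult.commute)
  ultimately show ?thesis
    by (simp add: power_divide power_mult_distrib exp_minus field_simps)
qed

lemma two_power_mult_exp_le: "(2::real) ^ d * exp (- 12 * real d) \<le> exp (- 8 * real d)"
proof -
  have "(2::real) ^ d = exp (real d * ln 2)"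
    by (simp add: exp_of_nat_mult)
  also have "\<dots> \<le> exp (4 * real d)"
    using ln_2_less_1 by (simp add: mult.commute mult_left_mono)
  finally have "(2::real) ^ d * exp (- 12 * real d) \<le> exp (4 * real d) * exp (- 12 * real d)"
    by simp
  also have "\<dots> = exp (- 8 * real d)"
    by (simp add: exp_add[symmetric])
  finally show ?thesis .
qed

theorem lemma7:
  fixes k :: nat and w :: "nat \<Rightarrow> real" and mu :: "nat \<Rightarrow> 'a::euclidean_space"
    and \<sigma> \<epsilon> :: real
  defines "d \<equiv> DIM('a)"
  assumes sigma_pos: "\<sigma> > 0"
    and w_pos: "\<And>j. j < k \<Longrightarrow> w j > 0"
    and w_sum: "(\<Sum>j<k. w j) = 1"
    and eps_pos: "\<epsilon> > 0"
    and eps_le: "\<And>j. j < k \<Longrightarrow>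
        \<epsilon> \<le> (w j powr (1 / real d) / (sqrt (2 * pi) * \<sigma> * exp 16)) ^ d"
    and sep: "\<And>j l. j < k \<Longrightarrow> l < k \<Longrightarrow> j \<noteq> l \<Longrightarrow>
        dist (mu j) (mu l) > 2 * \<sigma> * (MAX i\<in>{..<k}.
           sqrt (2 * real d * ln (1 / (\<sigma> * sqrt (2 * pi))) + 2 * ln (1 / \<epsilon>)
                 - 2 * ln (1 / w i)))"
  shows "measure (density lborel (gmm_density k w mu \<sigma>))
           {x. gmm_density k w mu \<sigma> x < \<epsilon>} \<le> exp (- 8 * real d)"
proof -
  let ?p = "gmm_density k w mu \<sigma>" and ?A = "{x. gmm_density k w mu \<sigma> x < \<epsilon>}"
  have w_nonneg: "\<And>j. j < k \<Longrightarrow> w j \<ge> 0" using w_pos less_imp_le by blast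
  have threshold: "\<epsilon> \<le> w j * exp (- 4 * (4 * real d)) / (sqrt (2 * pi) * \<sigma>) ^ d" if "j < k" for j
    using eps_le[OF that] gmm_threshold_eq[OF w_pos[OF that], of d]
    by (simp add: d_def mult.assoc)
  have "emeasure (density lborel ?p) ?A = (\<integral>\<^sup>+x. ennreal (?p x) * indicator ?A x \<partial>lborel)"
    by (subst emeasure_density) auto
  also have "\<dots> \<le> (\<integral>\<^sup>+x. ennreal (2 ^ d * exp (- 12 * real d) * gmm_density k w mu (2 * \<sigma>) x)
                  \<partial>lborel)"
  proof (rule nn_integral_mono)
    fix x
    show "ennreal (?p x) * indicator ?A x
        \<le> ennreal (2 ^ d * exp (- 12 * real d) * gmm_density k w mu (2 * \<sigma>) x)"
    proof (cases "x \<in> ?A")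
      case True
      then show ?thesis
        using gmm_density_le_doubled_below_threshold
            [OF sigma_pos w_nonneg threshold[unfolded d_def], where mu=mu and x=x]
        by (simp add: d_def ennreal_leI)
    qed simp
  qed
  also have "\<dots> = ennreal (2 ^ d * exp (- 12 * real d))"
    using sigma_pos w_nonneg
    by (simp add: ennreal_mult' nn_integral_cmult nn_integral_gmm_density w_sum)
  also have "\<dots> \<le> ennreal (exp (- 8 * real d))"
    by (intro ennreal_leI two_power_mult_exp_le)
  finally show ?thesis
    unfolding measure_def by (intro enn2real_leI) simp_all
qed

end
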